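(* Let $G$ be a finite group, let $H$ be a subgroup of $G$ with $[G:H]=r$, and let $D$ be a $(v,k,\lambda)$-difference set in $G$ with order $n=k-\lambda$. Suppose that some coset of $H$ contains exactly $s$ elements of $D$. Then \[ \left| s - \frac{k}{r} \right| \leq \sqrt{n}\,\frac{r-1}{r}. \]
   Context: For a finite group $G$ of order $v$ and a $k$-subset $D\subseteq G$ with $k\ge 1$, identify $D$ with the group ring element $\sum_{d\in D} d\in\mathbb{Z}G$, and for $a=\sum a_i g_i\in\mathbb{Z}G$ put $a^{(-1)}=\sum a_i g_i^{-1}$. $D$ is a $(v,k,\lambda)$-difference set in $G$ if $DD^{(-1)}=\lambda G+n\cdot 1$ in $\mathbb{Z}G$, where $n=k-\lambda$ (the order of $D$); equivalently every non-identity element of $G$ can be written as $d_1d_2^{-1}$ with $d_1,d_2\in D$ in exactly $\lambda$ ways. *)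

theory Defs
  imports Complex_Main "HOL-Algebra.Algebra"
begin

definition difference_set :: "('a, 'b) monoid_scheme \<Rightarrow> 'a set \<Rightarrow> nat \<Rightarrow> nat \<Rightarrow> nat \<Rightarrow> bool" where
  "difference_set G D v k lam \<longleftrightarrow>
     D \<subseteq> carrier G \<and> finite (carrier G) \<and> v = order G \<and> card D = k \<and> k \<ge> 1 \<and>
     (\<forall>g \<in> carrier G. g \<noteq> \<one>\<^bsub>G\<^esub> \<longrightarrow>
        card {(d1, d2). d1 \<in> D \<and> d2 \<in> D \<and> d1 \<otimes>\<^bsub>G\<^esub> inv\<^bsub>G\<^esub> d2 = g} = lam)"

end

theory Submission
  imports Defs "HOL-Analysis.Convex"
begin

(* For the right cosets C of H put x_C = |C \<inter> D|. These numbers sum to k, and the sum of their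
   squares counts the pairs (d1, d2) in D \<times> D with d1 d2^-1 in H, which is k + lam (|H| - 1) by the
   difference-set property. Together with lam (v - 1) = k (k - 1) this gives
   \<Sum>_C (x_C - k/r)^2 = n (r - 1) / r. The deviations x_C - k/r sum to zero, so by Cauchy-Schwarz on
   the remaining r - 1 cosets any single one satisfies r (x_C - k/r)^2 \<le> (r - 1) \<Sum>_C (x_C - k/r)^2,
   which is the claimed bound. A left coset g H is the right coset (g H g^-1) g of a conjugate
   subgroup of the same index. *)

lemma square_le_of_sum_eq_0:
  fixes y :: "'a \<Rightarrow> real"
  assumes "finite R" and "a \<in> R" and "(\<Sum>x\<in>R. y x) = 0"
  shows "real (card R) * (y a)\<^sup>2 \<le> (real (card R) - 1) * (\<Sum>x\<in>R. (y x)\<^sup>2)"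
proof -
  have "card R > 0"
    using assms(1,2) card_gt_0_iff by blast
  then have card: "real (card (R - {a})) = real (card R) - 1"
    using assms(1,2) by (simp add: of_nat_diff)
  have "(\<Sum>x\<in>R - {a}. y x) = - y a"
    using assms(3) sum.remove[OF assms(1,2), of y] by simp
  then have "(y a)\<^sup>2 \<le> (\<Sum>x\<in>R - {a}. (y x)\<^sup>2) * (real (card R) - 1)"
    using sum_squared_le_sum_of_squares[of y "R - {a}"] card by simp
  also have "\<dots> = ((\<Sum>x\<in>R. (y x)\<^sup>2) - (y a)\<^sup>2) * (real (card R) - 1)"
    using sum.remove[OF assms(1,2), of "\<lambda>x. (y x)\<^sup>2"] by simp
  finally show ?thesis by (simp add: algebra_simps)
qed

context group
begin

lemma mult_inv_eq_one_iff:
  assumes "a \<in> carrier G" and "b \<in> carrier G"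
  shows "a \<otimes> inv b = \<one> \<longleftrightarrow> a = b"
  using assms by (metis inv_closed inv_equality inv_inv r_inv)

lemma difference_set_card_quotients_in:
  assumes ds: "difference_set G D v k lam" and S: "S \<subseteq> carrier G"
  shows "card {p \<in> D \<times> D. fst p \<otimes> inv snd p \<in> S}
           = (if \<one> \<in> S then k else 0) + lam * card (S - {\<one>})"
proof -
  have D: "D \<subseteq> carrier G" and fin: "finite (carrier G)" and k: "card D = k"
    and lam: "\<And>g. g \<in> carrier G \<Longrightarrow> g \<noteq> \<one> \<Longrightarrow>
        card {(d1, d2). d1 \<in> D \<and> d2 \<in> D \<and> d1 \<otimes> inv d2 = g} = lam"
    using ds unfolding difference_set_def by auto
  have "finite D" "finite S"
    using D S fin finite_subset by blast+
  define q where "q p = fst p \<otimes> inv snd p" for p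
  define P where "P = {p \<in> D \<times> D. q p \<in> S}"
  have fibre: "card {p \<in> P. q p = g} = (if g = \<one> then k else lam)" if g: "g \<in> S" for g
  proof (cases "g = \<one>")
    case True
    then have "{p \<in> P. q p = g} = (\<lambda>d. (d, d)) ` D"
      using D g mult_inv_eq_one_iff unfolding P_def q_def by (auto simp: subset_iff)
    then show ?thesis
      using True k by (simp add: card_image inj_on_def)
  next
    case False
    have "{p \<in> P. q p = g} = {(d1, d2). d1 \<in> D \<and> d2 \<in> D \<and> d1 \<otimes> inv d2 = g}"
      using g unfolding P_def q_def by auto
    then show ?thesis
      using lam[of g] False g S by auto
  qed
  have "card P = (\<Sum>g\<in>S. card {p \<in> P. q p = g})"
    using sum.group[of P S q "\<lambda>_. 1::nat"] \<open>finite D\<close> \<open>finite S\<close> by (auto simp: P_def image_subset_iff)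
  also have "\<dots> = (\<Sum>g\<in>S. if g = \<one> then k else lam)"
    using fibre by simp
  also have "\<dots> = (if \<one> \<in> S then k else 0) + lam * card (S - {\<one>})"
    using \<open>finite S\<close> by (simp add: sum.If_cases Int_absorb1 Diff_eq flip: Compl_eq)
  finally show ?thesis
    unfolding P_def q_def .
qed

lemma difference_set_parameters:
  assumes "difference_set G D v k lam"
  shows "k * (k - 1) = lam * (v - 1)"
proof -
  have D: "D \<subseteq> carrier G" and fin: "finite (carrier G)" and k: "card D = k" and v: "v = order G"
    using assms unfolding difference_set_def by auto
  have "{p \<in> D \<times> D. fst p \<otimes> inv snd p \<in> carrier G} = D \<times> D"
    using D by (auto simp: subset_iff)
  then have "k * k = k + lam * (v - 1)"
    using difference_set_card_quotients_in[OF assms subset_refl] k v fin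
    by (simp add: card_cartesian_product order_def)
  then show ?thesis
    by (simp add: diff_mult_distrib2)
qed

lemma same_rcoset_iff:
  assumes H: "subgroup H G" and a: "a \<in> carrier G" and b: "b \<in> carrier G"
  shows "(\<exists>C\<in>rcosets H. a \<in> C \<and> b \<in> C) \<longleftrightarrow> a \<otimes> inv b \<in> H"
proof -
  have module: "a \<in> H #> b \<longleftrightarrow> a \<otimes> inv b \<in> H"
    by (rule subgroup.rcos_module[OF H is_group b a])
  have "a \<in> H #> b" if "C \<in> rcosets H" "a \<in> C" "b \<in> C" for C
  proof -
    obtain g where "g \<in> carrier G" "C = H #> g"
      using \<open>C \<in> rcosets H\<close> unfolding RCOSETS_def by auto
    then show ?thesis
      using repr_independence[OF _ _ H] that by metis
  qed
  moreover have "H #> b \<in> rcosets H" and "b \<in> H #> b"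
    using rcosetsI[OF subgroup.subset[OF H] b] rcos_self[OF b H] .
  ultimately show ?thesis
    using module by blast
qed

lemma finite_rcosets:
  assumes "subgroup H G" and "finite (carrier G)"
  shows "finite (rcosets H)"
  using rcosets_subset_PowG[OF assms(1)] assms(2) by (simp add: finite_subset)

lemma card_UN_rcosets:
  assumes H: "subgroup H G" and fin: "finite (carrier G)"
    and disj: "\<And>C C'. C \<inter> C' = {} \<Longrightarrow> A C \<inter> A C' = {}"
    and fin_A: "\<And>C. C \<in> rcosets H \<Longrightarrow> finite (A C)"
  shows "card (\<Union>C\<in>rcosets H. A C) = (\<Sum>C\<in>rcosets H. card (A C))"
proof (rule card_UN_disjoint)
  show "\<forall>C\<in>rcosets H. \<forall>C'\<in>rcosets H. C \<noteq> C' \<longrightarrow> A C \<inter> A C' = {}"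
    using disj rcos_disjoint[OF H] unfolding pairwise_def disjnt_def by blast
qed (use finite_rcosets[OF H fin] fin_A in auto)

lemma sum_card_rcosets_inter:
  assumes H: "subgroup H G" and fin: "finite (carrier G)" and D: "D \<subseteq> carrier G"
  shows "(\<Sum>C\<in>rcosets H. card (C \<inter> D)) = card D"
proof -
  have "(\<Union>C\<in>rcosets H. C \<inter> D) = D"
    using D rcosets_part_G[OF H] by blast
  moreover have "card (\<Union>C\<in>rcosets H. C \<inter> D) = (\<Sum>C\<in>rcosets H. card (C \<inter> D))"
    by (rule card_UN_rcosets[OF H fin]) (use D fin finite_subset in blast)+
  ultimately show ?thesis
    by simp
qed

lemma sum_card_rcosets_inter_squared:
  assumes H: "subgroup H G" and fin: "finite (carrier G)" and D: "D \<subseteq> carrier G"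
  shows "(\<Sum>C\<in>rcosets H. (card (C \<inter> D))\<^sup>2) = card {p \<in> D \<times> D. fst p \<otimes> inv snd p \<in> H}"
proof -
  have "p \<in> (\<Union>C\<in>rcosets H. (C \<inter> D) \<times> (C \<inter> D)) \<longleftrightarrow>
        p \<in> D \<times> D \<and> fst p \<otimes> inv snd p \<in> H" for p
    using same_rcoset_iff[OF H, of "fst p" "snd p"] D by (auto simp: mem_Times_iff)
  then have "(\<Union>C\<in>rcosets H. (C \<inter> D) \<times> (C \<inter> D)) = {p \<in> D \<times> D. fst p \<otimes> inv snd p \<in> H}"
    by blast
  moreover have "card (\<Union>C\<in>rcosets H. (C \<inter> D) \<times> (C \<inter> D))
      = (\<Sum>C\<in>rcosets H. card ((C \<inter> D) \<times> (C \<inter> D)))"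
    by (rule card_UN_rcosets[OF H fin]) (use D fin finite_subset in blast)+
  ultimately show ?thesis
    by (simp add: card_cartesian_product power2_eq_square)
qed

lemma difference_set_rcosets_sum_squared_deviation:
  assumes H: "subgroup H G" and fin: "finite (carrier G)" and ds: "difference_set G D v k lam"
  defines "r \<equiv> card (rcosets H)"
  shows "(\<Sum>C\<in>rcosets H. (real (card (C \<inter> D)) - real k / real r)\<^sup>2)
           = (real k - real lam) * (real r - 1) / real r"
proof -
  have D: "D \<subseteq> carrier G" and k: "card D = k" and v: "v = order G" and "k \<ge> 1"
    using ds unfolding difference_set_def by auto
  define h where "h = card H"
  have "\<one> \<in> H"
    using subgroup.one_closed[OF H] .
  have "finite H"
    using subgroup.subset[OF H] fin by (rule finite_subset)
  then have "h > 0"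
    using \<open>\<one> \<in> H\<close> unfolding h_def by (auto simp: card_gt_0_iff)
  have index: "r * h = v"
    using lagrange[OF H] v unfolding r_def h_def by simp
  moreover have "v > 0"
    using fin v order_gt_0_iff_finite by blast
  ultimately have "r > 0"
    by (metis mult_0 neq0_conv)
  have first: "(\<Sum>C\<in>rcosets H. real (card (C \<inter> D))) = k"
    using sum_card_rcosets_inter[OF H fin D] k by (simp flip: of_nat_sum)
  have "(\<Sum>C\<in>rcosets H. (card (C \<inter> D))\<^sup>2) = k + lam * (h - 1)"
    using sum_card_rcosets_inter_squared[OF H fin D] difference_set_card_quotients_in[OF ds]
      subgroup.subset[OF H] \<open>\<one> \<in> H\<close> \<open>finite H\<close> unfolding h_def by simp
  then have second: "(\<Sum>C\<in>rcosets H. (real (card (C \<inter> D)))\<^sup>2) = k + lam * (real h - 1)"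
    using \<open>h > 0\<close> by (simp add: of_nat_diff flip: of_nat_sum of_nat_power)
  have "real (k * (k - 1)) = real (lam * (r * h - 1))"
    using difference_set_parameters[OF ds] index by simp
  then have params: "real k * (real k - 1) = lam * (real r * h - 1)"
    using \<open>k \<ge> 1\<close> \<open>r > 0\<close> \<open>h > 0\<close> by (simp add: of_nat_diff)
  have "(\<Sum>C\<in>rcosets H. (real (card (C \<inter> D)) - real k / real r)\<^sup>2)
      = (\<Sum>C\<in>rcosets H. (real (card (C \<inter> D)))\<^sup>2)
        - 2 * (real k / real r) * (\<Sum>C\<in>rcosets H. real (card (C \<inter> D))) + r * (real k / real r)\<^sup>2"
    by (simp add: power2_diff sum.distrib sum_subtractf sum_distrib_left sum_divide_distrib r_def mult_ac)
  also have "\<dots> = (real k - real lam) * (real r - 1) / real r"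
    unfolding first second using params \<open>r > 0\<close>
    by (simp add: field_simps power2_eq_square)
  finally show ?thesis .
qed

lemma difference_set_rcoset_inter_bound:
  assumes H: "subgroup H G" and fin: "finite (carrier G)" and ds: "difference_set G D v k lam"
    and C: "C \<in> rcosets H"
  defines "r \<equiv> card (rcosets H)"
  shows "\<bar>real (card (C \<inter> D)) - real k / real r\<bar> \<le> sqrt (real k - real lam) * (real r - 1) / real r"
proof -
  define y where "y B = real (card (B \<inter> D)) - real k / real r" for B
  have "finite (rcosets H)"
    using finite_rcosets[OF H fin] .
  then have "r > 0"
    using C unfolding r_def by (auto simp: card_gt_0_iff)
  have D: "D \<subseteq> carrier G" and k: "card D = k"
    using ds unfolding difference_set_def by auto
  have "(\<Sum>C\<in>rcosets H. y C) = 0"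
    using sum_card_rcosets_inter[OF H fin D] k \<open>r > 0\<close>
    by (simp add: y_def sum_subtractf r_def flip: of_nat_sum)
  then have "r * (y C)\<^sup>2 \<le> (real r - 1) * (\<Sum>C\<in>rcosets H. (y C)\<^sup>2)"
    using square_le_of_sum_eq_0[OF \<open>finite (rcosets H)\<close> C] unfolding r_def by simp
  also have "\<dots> = (real r - 1) * ((real k - real lam) * (real r - 1) / real r)"
    using difference_set_rcosets_sum_squared_deviation[OF H fin ds] unfolding y_def r_def by simp
  finally have "(y C)\<^sup>2 \<le> (real k - real lam) * ((real r - 1) / real r)\<^sup>2"
    using \<open>r > 0\<close> by (simp add: field_simps power2_eq_square)
  then have "\<bar>y C\<bar> \<le> sqrt ((real k - real lam) * ((real r - 1) / real r)\<^sup>2)"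
    using real_sqrt_le_mono by fastforce
  also have "\<dots> = sqrt (real k - real lam) * (real r - 1) / real r"
    using \<open>r > 0\<close> by (simp add: real_sqrt_mult)
  finally show ?thesis
    unfolding y_def .
qed

lemma lcoset_in_rcosets_conjugate:
  assumes H: "subgroup H G" and fin: "finite (carrier G)" and g: "g \<in> carrier G"
  defines "K \<equiv> g <# H #> inv g"
  shows "subgroup K G" and "card (rcosets K) = card (rcosets H)" and "g <# H \<in> rcosets K"
proof -
  have gH: "g <# H \<subseteq> carrier G"
    using l_coset_subset_G[OF subgroup.subset[OF H] g] .
  show "subgroup K G"
    using subgroup_conjugation_is_surj1[of "inv g" H] g H unfolding K_def by simp
  have "g <# H \<in> lcosets H"
    using g unfolding LCOSETS_def by blast
  then have "card (g <# H) = card H"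
    using l_card_cosets_equal[OF _ subgroup.subset[OF H] fin] by simp
  moreover have "card K = card (g <# H)"
    using card_rcosets_equal[OF rcosetsI[OF gH inv_closed[OF g]] gH] unfolding K_def by simp
  ultimately have "card K = card H"
    by simp
  moreover have "card H > 0"
    using subgroup.one_closed[OF H] finite_subset[OF subgroup.subset[OF H] fin]
    by (auto simp: card_gt_0_iff)
  ultimately show "card (rcosets K) = card (rcosets H)"
    using lagrange[OF H] lagrange[OF \<open>subgroup K G\<close>] by (metis mult_right_cancel neq0_conv)
  have "g <# H = K #> g"
    using coset_mult_assoc[OF gH inv_closed[OF g] g] g gH unfolding K_def by simp
  then show "g <# H \<in> rcosets K"
    using rcosetsI[OF _ g] \<open>subgroup K G\<close> subgroup.subset by metis
qed

end

theorem theorem1p1: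
  fixes G (structure) and H :: "'a set" and D :: "'a set"
    and v k lam r s :: nat
  assumes "group G"
    and "finite (carrier G)"
    and "subgroup H G"
    and "r = card (rcosets H)"
    and "difference_set G D v k lam"
    and "C \<in> rcosets H \<or> C \<in> lcosets H"
    and "card (C \<inter> D) = s"
  shows "\<bar>real s - real k / real r\<bar> \<le> sqrt (real k - real lam) * (real r - 1) / real r"
proof -
  interpret group G by fact
  obtain K where "subgroup K G" "card (rcosets K) = r" "C \<in> rcosets K"
  proof (cases "C \<in> rcosets H")
    case False
    then obtain g where "g \<in> carrier G" "C = g <# H"
      using assms(6) unfolding LCOSETS_def by auto
    then show ?thesis
      using that lcoset_in_rcosets_conjugate[OF assms(3,2)] assms(4) by metis
  qed (use that assms in auto)
  then show ?thesis
    using difference_set_rcoset_inter_bound[OF _ assms(2,5)] assms(7) by metis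
qed

end
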